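(* Let $k\geq0$, $j\geq1$, let $\lambda=(\lambda_1,\ldots,\lambda_{j-1})$ and $\mu=(\mu_{j+2},\ldots,\mu_\ell)$ be integer vectors, and let $D$ be a valid set of pairs. Assume that $\sigma^j=\sigma^{j+1}=\mathfrak{c}$, $(j,j+1)\in D$, and that for each $h>j+1$, $(j,h)\in D$ if and only if $(j+1,h)\in D$. Work modulo the ideal generated by the relations $\mathfrak{c}_p\mathfrak{c}_p+2\sum_{i=1}^p(-1)^i\mathfrak{c}_{p+i}\mathfrak{c}_{p-i}=0$ for all $p>k$. (a) If $r,s\in\mathbb{Z}$ satisfy $r+s>2k$, then $R^D\sigma_{\lambda,r,s,\mu}=-R^D\sigma_{\lambda,s,r,\mu}$ in $\mathbb{Z}[\sigma]$ modulo these relations. (b) For any integer $r>k$, $R^D\tau_{\lambda,r+1,r,\mu}=R^D\sigma_{\lambda,r+1,r,\mu}$ in $\mathbb{Z}[\sigma,z]$ modulo these relations.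
   Context: For each $r\geq1$, $\sigma^r=(\sigma^r_i)_{i\in\mathbb{Z}}$ is a sequence of variables with $\sigma^r_0=1$, $\sigma^r_i=0$ for $i<0$; $\mathbb{Z}[\sigma]$ is the polynomial ring in these variables; $\mathfrak{c}=(\mathfrak{c}_i)_{i\in\mathbb{Z}}$ is a sequence of variables (so $\mathfrak{c}_0=1$, $\mathfrak{c}_i=0$ for $i<0$ here). $\sigma_\alpha:=\sigma^1_{\alpha_1}\sigma^2_{\alpha_2}\cdots$; $(\lambda,r,s,\mu)$ is the concatenation. $R_{ij}$ ($i<j$) raises entry $i$ and lowers entry $j$ by 1; $R\sigma_\alpha:=\sigma_{R\alpha}$ for monomials $R$. A valid set of pairs is a finite order ideal $D$ in $\{(i,j)\mid1\leq i<j\}$ with $(i',j')\leq(i,j)$ iff $i'\leq i$, $j'\leq j$. $R^D:=\prod_{1\leq i<j\leq\ell}(1-R_{ij})\prod_{(i,j)\in D}(1+R_{ij})^{-1}$, expanded and applied linearly. $z$ a variable; $\tau^r:=\sigma^r$ for $r\neq j$, $\tau^j_p:=\sigma^j_p+z\sigma^j_{p-1}$; $\tau_\alpha$ and $R\tau_\alpha:=\tau_{R\alpha}$ analogously. *)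

theory Defs
  imports "HOL-Computational_Algebra.Formal_Power_Series"
begin

(* Integer vectors alpha = (alpha_1,...,alpha_l) are int lists; entry m (1 <= m <= l)
   is  alpha ! (m - 1).  A family sigma^r_i is a function  sig :: nat => int => 'a. *)

definition smon :: "(nat \<Rightarrow> int \<Rightarrow> 'a::comm_ring_1) \<Rightarrow> int list \<Rightarrow> 'a" where
  "smon sig \<alpha> = (\<Prod>m\<in>{1..length \<alpha>}. sig m (\<alpha> ! (m - 1)))"

definition pairs :: "nat \<Rightarrow> (nat \<times> nat) set" where
  "pairs l = {(i, j). 1 \<le> i \<and> i < j \<and> j \<le> l}"

definition valid_pairs :: "(nat \<times> nat) set \<Rightarrow> bool" where
  "valid_pairs D \<longleftrightarrow> finite D \<and> D \<subseteq> {(i, j). 1 \<le> i \<and> i < j} \<and>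
     (\<forall>i j i' j'. (i, j) \<in> D \<and> 1 \<le> i' \<and> i' < j' \<and> i' \<le> i \<and> j' \<le> j \<longrightarrow> (i', j') \<in> D)"

(* the monomial prod R_{ij}^{n(i,j)} applied to alpha *)
definition raise :: "(nat \<times> nat \<Rightarrow> nat) \<Rightarrow> int list \<Rightarrow> int list" where
  "raise n \<alpha> = map (\<lambda>m. \<alpha> ! (m - 1) + (\<Sum>j\<in>{m<..length \<alpha>}. int (n (m, j)))
                                 - (\<Sum>i\<in>{1..<m}. int (n (i, m)))) [1..<length \<alpha> + 1]"

(* the factor of R^D belonging to the pair p (in the variable R_p):
   (1 - R_p) * (1 + R_p)^(-1) if p in D, and (1 - R_p) otherwise;
   (1 + X)^(-1) is expanded as the geometric series sum (-1)^m X^m *)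
definition RD_factor :: "(nat \<times> nat) set \<Rightarrow> nat \<times> nat \<Rightarrow> int fps" where
  "RD_factor D p = (1 - fps_X) * (if p \<in> D then Abs_fps (\<lambda>m. (-1) ^ m) else 1)"

(* coefficient of the monomial prod_{p} R_p^{n p} in the expansion of R^D (length l) *)
definition RD_coeff :: "(nat \<times> nat) set \<Rightarrow> nat \<Rightarrow> (nat \<times> nat \<Rightarrow> nat) \<Rightarrow> int" where
  "RD_coeff D l n = (\<Prod>p\<in>pairs l. fps_nth (RD_factor D p) (n p))"

(* Only monomials n for which R^n alpha has
   no negative entry are summed: the others contribute sig_{...} = 0 by the convention
   sig^r_i = 0 for i < 0, and the remaining set is finite. *)
definition RD :: "(nat \<times> nat) set \<Rightarrow> (nat \<Rightarrow> int \<Rightarrow> 'a::comm_ring_1) \<Rightarrow> int list \<Rightarrow> 'a" where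
  "RD D sig \<alpha> =
     (\<Sum>n\<in>{n. (\<forall>p. p \<notin> pairs (length \<alpha>) \<longrightarrow> n p = 0) \<and> (\<forall>x\<in>set (raise n \<alpha>). 0 \<le> x)}.
        of_int (RD_coeff D (length \<alpha>) n) * smon sig (raise n \<alpha>))"

end

(* Expand R^D sigma_alpha in the exponent of R_(j,j+1).  Since (j, j+1) is in D, this operator
   enters through (1 - R)/(1 + R) = 1 + 2 sum_(i>0) (-1)^i R^i, and since sigma^j = sigma^(j+1) = c,
   every remaining monomial contributes T(x, y) = sum_i q_i c_(x+i) c_(y-i), where x and y are its
   entries at positions j and j+1.  The hypothesis on D makes the exchange of j and j+1 an involution
   of these monomials, so R^D sigma_(..,r,s,..) + R^D sigma_(..,s,r,..) collects the terms
   T(x, y) + T(y, x) = 2 eps T(m, m), with m = (x+y)/2 and eps = (-1)^((x-y)/2) (no term if x+y is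
   odd).  In this symmetric sum the operators R_(h,j), R_(h,j+1) with h < j drop out, because the
   coefficients of (1 - R)/(1 + R) and (1 + R)/(1 - R) are mutually inverse.  The surviving terms
   have x + y >= r + s > 2k, and T(m, m) with m > k is exactly the given relation.
   For (b), tau changes R^D sigma_(..,r+1,r,..) by z R^D sigma_(..,r,r,..).  For this swap-invariant
   vector the antisymmetric part T(x, y) - eps T(m, m) cancels along the orbits of the involution,
   so no division by 2 is needed. *)

theory Submission
  imports Defs "HOL-Combinatorics.Transposition" "HOL-Library.Disjoint_Sets"
begin

lemma sum_antisym_involution_eq_0:
  fixes f :: "'b \<Rightarrow> 'a::ab_group_add"
  assumes "finite X"
    and "\<And>x. x \<in> X \<Longrightarrow> h x \<in> X" and "\<And>x. x \<in> X \<Longrightarrow> h (h x) = x"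
    and "\<And>x. x \<in> X \<Longrightarrow> f (h x) = - f x" and "\<And>x. x \<in> X \<Longrightarrow> h x = x \<Longrightarrow> f x = 0"
  shows "(\<Sum>x\<in>X. f x) = 0"
proof -
  have "(\<Sum>x\<in>X. f x) = (\<Sum>x\<in>{x\<in>X. h x \<noteq> x}. f x)"
    using assms by (intro sum.mono_neutral_right) auto
  also have "\<dots> = 0"
  proof (rule sum_involution_eq_0[where h = h])
    fix x assume x: "x \<in> {x\<in>X. h x \<noteq> x}"
    then show "f (h x) + f x = 0" "h (h x) = x" "h x \<noteq> x"
      using assms(3,4) by auto
    show "h x \<in> {x\<in>X. h x \<noteq> x}"
      using x assms(2,3) by force
  qed
  finally show ?thesis .
qed

lemma sum_fun_upd_zero:
  assumes "finite P" "q \<in> P" "f q = 0"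
  shows "(\<Sum>p\<in>P. (f(q := v)) p) = (\<Sum>p\<in>P. f p) + v"
  using assms by (simp add: sum.remove add.commute)

definition exps_le :: "'b set \<Rightarrow> nat \<Rightarrow> ('b \<Rightarrow> nat) set" where
  "exps_le P M = {n. (\<forall>p. p \<notin> P \<longrightarrow> n p = 0) \<and> (\<Sum>p\<in>P. n p) \<le> M}"

lemma finite_exps_le:
  assumes "finite P"
  shows "finite (exps_le P M)"
proof (rule finite_subset)
  show "exps_le P M \<subseteq> {n. \<forall>p. (p \<in> P \<longrightarrow> n p \<in> {..M}) \<and> (p \<notin> P \<longrightarrow> n p = 0)}"
    using assms by (auto simp: exps_le_def intro: order.trans[OF member_le_sum])
  show "finite {n. \<forall>p. (p \<in> P \<longrightarrow> n p \<in> {..M}) \<and> (p \<notin> P \<longrightarrow> n p = 0)}"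
    using assms by (intro finite_set_of_finite_funs) auto
qed

lemma exps_le_outside:
  assumes "n \<in> exps_le P M" "p \<notin> P"
  shows "n p = 0"
  using assms by (simp add: exps_le_def)

lemma exps_le_sum_bound:
  assumes "n \<in> exps_le P M"
  shows "(\<Sum>p\<in>P. n p) \<le> M"
  using assms by (simp add: exps_le_def)

lemma sum_image_fun_upd:
  assumes "finite B" and "\<And>n. n \<in> B \<Longrightarrow> finite (C n)" and "\<And>n. n \<in> B \<Longrightarrow> n q = 0"
  shows "(\<Sum>n\<in>(\<lambda>(n, i). n(q := i)) ` Sigma B C. f n) = (\<Sum>n\<in>B. \<Sum>i\<in>C n. f (n(q := i)))"
proof -
  have "inj_on (\<lambda>(n, i). n(q := i)) (Sigma B C)"
  proof (rule inj_onI, clarsimp)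
    fix n i n' i' assume "n \<in> B" "n' \<in> B" and eq: "n(q := i) = n'(q := i')"
    then have "n q = 0" "n' q = 0" by (simp_all add: assms(3))
    then have "n p = n' p" for p
      using fun_cong[OF eq, of p] by (cases "p = q") auto
    then show "n = n' \<and> i = i'"
      using fun_cong[OF eq, of q] by auto
  qed
  then show ?thesis
    using assms by (simp add: sum.reindex sum.Sigma split_def)
qed

lemma sum_exps_le_split_two_coords:
  fixes f :: "('b \<Rightarrow> nat) \<Rightarrow> 'a::comm_monoid_add"
  assumes P: "finite P" "q1 \<in> P" "q2 \<in> P" "q1 \<noteq> q2"
    and A: "\<And>n a b. n(q1 := a, q2 := b) \<in> A \<longleftrightarrow> n \<in> A"
  shows "(\<Sum>n\<in>exps_le P M \<inter> A. f n)
           = (\<Sum>\<nu>\<in>exps_le P M \<inter> A \<inter> {\<nu>. \<nu> q1 = 0 \<and> \<nu> q2 = 0}.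
                \<Sum>m\<le>M - sum \<nu> P. \<Sum>a\<le>m. f (\<nu>(q1 := a, q2 := m - a)))"
proof -
  let ?S0 = "exps_le P M \<inter> A \<inter> {\<nu>. \<nu> q1 = 0 \<and> \<nu> q2 = 0}"
  have tot: "sum (\<nu>(q1 := a, q2 := b)) P = sum \<nu> P + a + b" if "\<nu> q1 = 0" "\<nu> q2 = 0" for \<nu> a b
    using that P sum_fun_upd_zero[of P q1 \<nu> a] sum_fun_upd_zero[of P q2 "\<nu>(q1 := a)" b] by simp
  have "(\<Sum>n\<in>exps_le P M \<inter> A. f n)
      = (\<Sum>(\<nu>, m, a)\<in>Sigma ?S0 (\<lambda>\<nu>. Sigma {..M - sum \<nu> P} (\<lambda>m. {..m})). f (\<nu>(q1 := a, q2 := m - a)))"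
  proof (rule sum.reindex_bij_witness[where i = "\<lambda>(\<nu>, m, a). \<nu>(q1 := a, q2 := m - a)"
        and j = "\<lambda>n. (n(q1 := 0, q2 := 0), n q1 + n q2, n q1)"])
    fix n assume n: "n \<in> exps_le P M \<inter> A"
    define \<nu> where "\<nu> = n(q1 := 0, q2 := 0)"
    have \<nu>0: "\<nu> q1 = 0" "\<nu> q2 = 0" by (simp_all add: \<nu>_def)
    have n_eq: "\<nu>(q1 := n q1, q2 := n q2) = n"
      using P(4) by (auto simp: \<nu>_def fun_eq_iff)
    have "sum n P = sum \<nu> P + n q1 + n q2"
      using tot[OF \<nu>0, of "n q1" "n q2"] by (simp add: n_eq)
    moreover have "\<nu> p = 0" if "p \<notin> P" for p
      using that n P by (auto simp: \<nu>_def exps_le_def)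
    moreover have "\<nu> \<in> A"
      using n A[of n 0 0] by (simp add: \<nu>_def)
    ultimately show "(n(q1 := 0, q2 := 0), n q1 + n q2, n q1) \<in> Sigma ?S0 (\<lambda>\<nu>. Sigma {..M - sum \<nu> P} (\<lambda>m. {..m}))"
      unfolding \<nu>_def[symmetric] using n \<nu>0 by (auto simp: exps_le_def)
    show "(\<lambda>(\<nu>, m, a). \<nu>(q1 := a, q2 := m - a)) (n(q1 := 0, q2 := 0), n q1 + n q2, n q1) = n"
      using P(4) by (auto simp: fun_eq_iff)
  next
    fix t assume "t \<in> Sigma ?S0 (\<lambda>\<nu>. Sigma {..M - sum \<nu> P} (\<lambda>m. {..m}))"
    then obtain \<nu> m a where t: "t = (\<nu>, m, a)" and \<nu>: "\<nu> \<in> ?S0" and m: "m \<le> M - sum \<nu> P" and a: "a \<le> m"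
      by auto
    have "sum (\<nu>(q1 := a, q2 := m - a)) P \<le> M"
      using tot[of \<nu> a "m - a"] \<nu> m a by (auto simp: exps_le_def)
    then show "(\<lambda>(\<nu>, m, a). \<nu>(q1 := a, q2 := m - a)) t \<in> exps_le P M \<inter> A"
      using t \<nu> P A by (auto simp: exps_le_def)
    show "(\<lambda>n. (n(q1 := 0, q2 := 0), n q1 + n q2, n q1)) ((\<lambda>(\<nu>, m, a). \<nu>(q1 := a, q2 := m - a)) t) = t"
      using t \<nu> a P(4) by (auto simp: fun_eq_iff)
  qed simp
  also have "\<dots> = (\<Sum>\<nu>\<in>?S0. \<Sum>m\<le>M - sum \<nu> P. \<Sum>a\<le>m. f (\<nu>(q1 := a, q2 := m - a)))"
    using P(1) by (simp add: sum.Sigma split_def finite_exps_le)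
  finally show ?thesis .
qed

section \<open>The coefficients of (1 - X)/(1 + X)\<close>

definition neg_one_pow :: "int \<Rightarrow> int" where
  "neg_one_pow d = (if even d then 1 else -1)"

definition half_sign :: "int \<Rightarrow> int" where
  "half_sign d = (if even d then neg_one_pow (d div 2) else 0)"

text \<open>The coefficients of (1 - X)/(1 + X), extended by 0 to negative indices.\<close>
definition cayley_coeff :: "int \<Rightarrow> int" where
  "cayley_coeff i = (if i < 0 then 0 else if i = 0 then 1 else 2 * neg_one_pow i)"

lemma neg_one_pow_add: "neg_one_pow (u + v) = neg_one_pow u * neg_one_pow v"
  by (auto simp: neg_one_pow_def)

lemma neg_one_pow_minus: "neg_one_pow (- u) = neg_one_pow u"
  by (auto simp: neg_one_pow_def)

lemma neg_one_pow_diff: "neg_one_pow (u - v) = neg_one_pow u * neg_one_pow v"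
  using neg_one_pow_add[of u "- v"] by (simp add: neg_one_pow_minus)

lemma power_neg_one_eq_neg_one_pow: "(-1::int) ^ k = neg_one_pow (int k)"
  by (auto simp: neg_one_pow_def)

lemma half_sign_minus: "half_sign (- d) = half_sign d"
proof (cases "even d")
  case True
  then obtain t where "d = 2 * t" by blast
  moreover have "- (2 * t) div 2 = - t" by simp
  ultimately show ?thesis by (simp add: half_sign_def neg_one_pow_minus)
qed (simp add: half_sign_def)

lemma half_sign_shift: "half_sign (d - 2 * int a) = half_sign d * (-1) ^ a"
proof (cases "even d")
  case True
  then have "(d - 2 * int a) div 2 = d div 2 - int a" by auto
  then show ?thesis
    using True by (simp add: half_sign_def neg_one_pow_diff power_neg_one_eq_neg_one_pow)
qed (simp add: half_sign_def)

lemma cayley_coeff_add_neg: "cayley_coeff i + cayley_coeff (- i) = 2 * neg_one_pow i"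
  by (auto simp: cayley_coeff_def neg_one_pow_minus neg_one_pow_def)

lemma cayley_coeff_of_nat: "cayley_coeff (int a) = (if a = 0 then 1 else 2 * (-1) ^ a)"
  by (simp add: cayley_coeff_def power_neg_one_eq_neg_one_pow)

lemma fps_nth_RD_factor_0 [simp]: "fps_nth (RD_factor D p) 0 = 1"
  by (simp add: RD_factor_def algebra_simps)

lemma fps_nth_RD_factor_mem:
  assumes "p \<in> D"
  shows "fps_nth (RD_factor D p) i = cayley_coeff (int i)"
proof -
  have "RD_factor D p = Abs_fps (\<lambda>m. (-1) ^ m) - fps_X * Abs_fps (\<lambda>m. (-1) ^ m)"
    using assms by (simp add: RD_factor_def algebra_simps)
  then show ?thesis
    by (cases i) (simp_all only: cayley_coeff_of_nat, simp_all)
qed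

lemma sum_cayley_coeff_lessThan: "(\<Sum>b<Suc m. cayley_coeff (int b)) = (-1) ^ m"
  by (induction m) (simp_all only: sum.lessThan_Suc cayley_coeff_of_nat, simp_all)

text \<open>The series (1 - X)/(1 + X) and (1 + X)/(1 - X) are mutually inverse.\<close>
lemma cayley_coeff_alternating_convolution:
  "(\<Sum>a\<le>m. cayley_coeff (int a) * cayley_coeff (int (m - a)) * (-1) ^ a) = (if m = 0 then 1 else 0)"
proof (cases m)
  case (Suc k)
  have signed: "cayley_coeff (int a) * (-1) ^ a = (if a = 0 then 1 else 2)" for a
    by (simp add: cayley_coeff_of_nat)
  have "(\<Sum>a\<le>m. cayley_coeff (int a) * cayley_coeff (int (m - a)) * (-1) ^ a)
      = (\<Sum>a\<le>m. (if a = 0 then 1 else 2) * cayley_coeff (int (m - a)))"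
    by (intro sum.cong refl) (simp add: signed flip: mult.assoc[of _ _ "(-1) ^ _"] mult.commute)
  also have "\<dots> = cayley_coeff (int m) + 2 * (\<Sum>a\<in>{Suc 0..m}. cayley_coeff (int (m - a)))"
    by (simp add: atMost_atLeast0 sum.atLeast_Suc_atMost sum_distrib_left)
  also have "(\<Sum>a\<in>{Suc 0..m}. cayley_coeff (int (m - a))) = (\<Sum>b<m. cayley_coeff (int b))"
    using sum.atLeastLessThan_rev_at_least_Suc_atMost[of "\<lambda>b. cayley_coeff (int b)" 0 m]
    by (simp add: atLeast0LessThan)
  also have "(\<Sum>b<m. cayley_coeff (int b)) = (-1) ^ k"
    unfolding Suc by (rule sum_cayley_coeff_lessThan)
  also have "cayley_coeff (int m) = 2 * (-1) ^ m"
    using Suc by (simp only: cayley_coeff_of_nat) simp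
  finally show ?thesis
    using Suc by simp
qed (simp add: cayley_coeff_def)

lemma cayley_coeff_half_sign_convolution:
  "(\<Sum>a\<le>m. cayley_coeff (int a) * cayley_coeff (int (m - a)) * half_sign (d + int m - 2 * int a))
     = (if m = 0 then half_sign d else 0)"
proof -
  have "(\<Sum>a\<le>m. cayley_coeff (int a) * cayley_coeff (int (m - a)) * half_sign (d + int m - 2 * int a))
      = half_sign (d + int m) * (\<Sum>a\<le>m. cayley_coeff (int a) * cayley_coeff (int (m - a)) * (-1) ^ a)"
    by (simp only: half_sign_shift) (simp add: sum_distrib_left algebra_simps)
  also have "\<dots> = half_sign (d + int m) * (if m = 0 then 1 else 0)"
    by (simp only: cayley_coeff_alternating_convolution)
  finally show ?thesis by simp
qed

section \<open>Cayley pairs\<close>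

text \<open>The action of (1 - R)/(1 + R) on c_x c_y, where R raises x and lowers y;
  cayley_pair_eq_sum gives the form sum_i q_i c_(x+i) c_(y-i).\<close>
definition cayley_pair :: "(int \<Rightarrow> 'a::comm_ring_1) \<Rightarrow> int \<Rightarrow> int \<Rightarrow> 'a" where
  "cayley_pair c x y = (\<Sum>a\<in>{0..x + y}. of_int (cayley_coeff (a - x)) * c a * c (x + y - a))"

definition cayley_pair_sym :: "(int \<Rightarrow> 'a::comm_ring_1) \<Rightarrow> int \<Rightarrow> int \<Rightarrow> 'a" where
  "cayley_pair_sym c x y = of_int (half_sign (x - y)) * cayley_pair c ((x + y) div 2) ((x + y) div 2)"

lemma cayley_pair_eq_sum:
  fixes c :: "int \<Rightarrow> 'a::comm_ring_1"
  assumes cneg: "\<forall>i<0. c i = 0" and "y \<le> int K"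
  shows "(\<Sum>i\<le>K. of_int (cayley_coeff (int i)) * c (x + int i) * c (y - int i)) = cayley_pair c x y"
proof -
  define g where "g a = of_int (cayley_coeff (a - x)) * c a * c (x + y - a)" for a
  have "(\<Sum>i\<le>K. of_int (cayley_coeff (int i)) * c (x + int i) * c (y - int i)) = (\<Sum>a\<in>{x..x + int K}. g a)"
    by (rule sum.reindex_bij_witness[where i = "\<lambda>a. nat (a - x)" and j = "\<lambda>i. x + int i"])
      (auto simp: g_def)
  also have "\<dots> = (\<Sum>a\<in>{0..x + y}. g a)"
    using assms by (intro sum.mono_neutral_cong) (auto simp: g_def cayley_coeff_def)
  finally show ?thesis by (simp add: cayley_pair_def g_def)
qed

text \<open>\<psi> a is the coefficient of c_a c_(N-a) in
  cayley_pair c x y + cayley_pair c y x - 2 * cayley_pair_sym c x y.\<close>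
lemma cayley_swap_weight_antisym:
  fixes x y a :: int
  defines "N \<equiv> x + y"
  defines "\<psi> \<equiv> \<lambda>a. cayley_coeff (a - x) + cayley_coeff (a - y)
                   - (if even N then 2 * half_sign (x - y) * cayley_coeff (a - N div 2) else 0)"
  shows "\<psi> (N - a) + \<psi> a = 0"
proof -
  have sx: "cayley_coeff (N - a - y) + cayley_coeff (a - x) = 2 * neg_one_pow (a - x)"
    using cayley_coeff_add_neg[of "a - x"] by (simp add: N_def algebra_simps)
  have sy: "cayley_coeff (N - a - x) + cayley_coeff (a - y) = 2 * neg_one_pow (a - y)"
    using cayley_coeff_add_neg[of "a - y"] by (simp add: N_def algebra_simps)
  show ?thesis
  proof (cases "even N")
    case True
    define p where "p = N div 2"
    have Np: "N = 2 * p" using True by (simp add: p_def)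
    have sp: "cayley_coeff (N - a - p) + cayley_coeff (a - p) = 2 * neg_one_pow (a - p)"
      using cayley_coeff_add_neg[of "a - p"] by (simp add: Np algebra_simps)
    have xy: "x - y = 2 * (x - p)" using Np by (simp add: N_def)
    then have "even (x - y)" by (metis dvd_triv_left)
    moreover have "(x - y) div 2 = x - p" using xy by simp
    ultimately have hs: "half_sign (x - y) = neg_one_pow (x - p)"
      by (simp add: half_sign_def)
    have "a - y = (a - x) + 2 * (x - p)" using Np by (simp add: N_def)
    then have "neg_one_pow (a - y) = neg_one_pow (a - x) * neg_one_pow (2 * (x - p))"
      by (simp only: neg_one_pow_add)
    then have "neg_one_pow (a - y) = neg_one_pow (a - x)"
      by (simp add: neg_one_pow_def)
    moreover have "neg_one_pow (a - x) = neg_one_pow (a - p) * neg_one_pow (x - p)"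
      using neg_one_pow_diff[of "a - p" "x - p"] by simp
    ultimately have q1: "cayley_coeff (N - (a + y)) = 2 * neg_one_pow (a - p) * neg_one_pow (x - p) - cayley_coeff (a - x)"
        and q2: "cayley_coeff (N - (a + x)) = 2 * neg_one_pow (a - p) * neg_one_pow (x - p) - cayley_coeff (a - y)"
        and q3: "cayley_coeff (N - (a + p)) = 2 * neg_one_pow (a - p) - cayley_coeff (a - p)"
      using sx sy sp by (simp_all add: algebra_simps)
    show ?thesis
      using True hs unfolding \<psi>_def p_def[symmetric] by (simp add: q1 q2 q3 algebra_simps)
  next
    case False
    then have "odd (x - y)" unfolding N_def by presburger
    then have "neg_one_pow (a - y) = - neg_one_pow (a - x)"
      using neg_one_pow_add[of "a - x" "x - y"] by (simp add: neg_one_pow_def)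
    then show ?thesis
      unfolding \<psi>_def using False sx sy by (simp add: algebra_simps)
  qed
qed

lemma cayley_pair_add_swap: "cayley_pair c x y + cayley_pair c y x = 2 * cayley_pair_sym c x y"
proof -
  define N where "N = x + y"
  define \<psi> where "\<psi> a = cayley_coeff (a - x) + cayley_coeff (a - y)
                   - (if even N then 2 * half_sign (x - y) * cayley_coeff (a - N div 2) else 0)" for a
  have anti: "\<psi> (N - a) + \<psi> a = 0" for a
    unfolding \<psi>_def N_def by (rule cayley_swap_weight_antisym)
  have sym: "2 * cayley_pair_sym c x y
      = (\<Sum>a\<in>{0..N}. of_int (if even N then 2 * half_sign (x - y) * cayley_coeff (a - N div 2) else 0)
                        * (c a * c (N - a)))"
  proof (cases "even N")
    case True
    then have "N div 2 + N div 2 = N" by simp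
    with True show ?thesis
      by (simp add: cayley_pair_sym_def cayley_pair_def N_def sum_distrib_left algebra_simps)
  next
    case False
    then have "odd (x - y)" unfolding N_def by presburger
    with False show ?thesis by (simp add: cayley_pair_sym_def half_sign_def)
  qed
  have "cayley_pair c x y + cayley_pair c y x - 2 * cayley_pair_sym c x y
      = (\<Sum>a\<in>{0..N}. of_int (\<psi> a) * (c a * c (N - a)))"
    unfolding sym cayley_pair_def \<psi>_def N_def
    by (simp add: add.commute[of y x] sum_subtractf[symmetric] sum.distrib[symmetric] algebra_simps)
  also have "\<dots> = 0"
  proof (rule sum_antisym_involution_eq_0[where h = "\<lambda>a. N - a"])
    fix a
    have "\<psi> (N - a) = - \<psi> a" using anti[of a] by linarith
    then show "of_int (\<psi> (N - a)) * (c (N - a) * c (N - (N - a))) = - (of_int (\<psi> a) * (c a * c (N - a)))"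
      by (simp add: ac_simps)
    show "of_int (\<psi> a) * (c a * c (N - a)) = 0" if "N - a = a"
      using anti[of a] that by simp
  qed auto
  finally show ?thesis by simp
qed

lemma cayley_pair_sym_commute: "cayley_pair_sym c y x = cayley_pair_sym c x y"
  using half_sign_minus[of "x - y"] by (simp add: cayley_pair_sym_def add.commute)

lemma cayley_pair_sub_sym_swap:
  "cayley_pair c y x - cayley_pair_sym c y x = - (cayley_pair c x y - cayley_pair_sym c x y)"
proof -
  have "cayley_pair c y x = 2 * cayley_pair_sym c x y - cayley_pair c x y"
    using cayley_pair_add_swap[of c x y] by (simp add: eq_diff_eq add.commute)
  then show ?thesis
    using cayley_pair_sym_commute[of c y x] by (simp add: algebra_simps)
qed

lemma cayley_pair_sym_diag: "cayley_pair_sym c x x = cayley_pair c x x"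
  by (simp add: cayley_pair_sym_def half_sign_def neg_one_pow_def)

lemma cayley_pair_diag:
  "cayley_pair c (int p) (int p)
     = c (int p) * c (int p) + 2 * (\<Sum>i\<in>{1..p}. (-1) ^ i * c (int p + int i) * c (int p - int i))"
proof -
  define g where "g a = of_int (cayley_coeff (a - int p)) * c a * c (int p + int p - a)" for a
  have "cayley_pair c (int p) (int p) = (\<Sum>a\<in>{int p..int p + int p}. g a)"
    unfolding cayley_pair_def g_def
    by (rule sum.mono_neutral_right) (auto simp: cayley_coeff_def)
  also have "{int p..int p + int p} = insert (int p) {int p<..int p + int p}"
    by auto
  also have "(\<Sum>a\<in>insert (int p) {int p<..int p + int p}. g a) = g (int p) + (\<Sum>a\<in>{int p<..int p + int p}. g a)"
    by simp
  also have "(\<Sum>a\<in>{int p<..int p + int p}. g a) = (\<Sum>i\<in>{1..p}. g (int p + int i))"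
    by (rule sum.reindex_bij_witness[where i = "\<lambda>i. int p + int i" and j = "\<lambda>a. nat (a - int p)"])
      auto
  also have "\<dots> = 2 * (\<Sum>i\<in>{1..p}. (-1) ^ i * c (int p + int i) * c (int p - int i))"
    unfolding sum_distrib_left
    by (intro sum.cong refl) (simp add: g_def cayley_coeff_def algebra_simps flip: power_neg_one_eq_neg_one_pow)
  finally show ?thesis by (simp add: g_def cayley_coeff_def)
qed

lemma cayley_pair_sym_eq_0:
  assumes "2 * int k < x + y" and rel: "\<forall>p>k. cayley_pair c (int p) (int p) = 0"
  shows "cayley_pair_sym c x y = 0"
proof (cases "even (x + y)")
  case True
  then obtain t where t: "x + y = 2 * t" by blast
  then have "int k < t" using assms(1) by simp
  then have "cayley_pair c t t = 0"
    using rel[rule_format, of "nat t"] by simp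
  then show ?thesis by (simp add: cayley_pair_sym_def t)
next
  case False
  then have "odd (x - y)" by presburger
  then show ?thesis by (simp add: cayley_pair_sym_def half_sign_def)
qed

section \<open>Raising operators\<close>

definition raised_entry :: "(nat \<times> nat \<Rightarrow> nat) \<Rightarrow> int list \<Rightarrow> nat \<Rightarrow> int" where
  "raised_entry n \<alpha> m =
     \<alpha> ! (m - 1) + (\<Sum>b\<in>{m<..length \<alpha>}. int (n (m, b))) - (\<Sum>a\<in>{1..<m}. int (n (a, m)))"

lemma raise_eq_map: "raise n \<alpha> = map (raised_entry n \<alpha>) [1..<length \<alpha> + 1]"
  by (simp add: raise_def raised_entry_def)

lemma length_raise [simp]: "length (raise n \<alpha>) = length \<alpha>"
  unfolding raise_def by (simp add: Suc_le_eq)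

lemma nth_raise:
  assumes "1 \<le> m" "m \<le> length \<alpha>"
  shows "raise n \<alpha> ! (m - 1) = raised_entry n \<alpha> m"
proof -
  have "m - 1 < length [1..<length \<alpha> + 1]" "[1..<length \<alpha> + 1] ! (m - 1) = m"
    using assms by (auto simp del: upt_Suc)
  then show ?thesis by (simp only: raise_eq_map nth_map)
qed

lemma smon_raise: "smon \<sigma> (raise n \<alpha>) = (\<Prod>m\<in>{1..length \<alpha>}. \<sigma> m (raised_entry n \<alpha> m))"
  unfolding smon_def length_raise by (intro prod.cong refl) (metis atLeastAtMost_iff nth_raise)

lemma raise_nonneg_iff:
  "(\<forall>x\<in>set (raise n \<alpha>). 0 \<le> x) \<longleftrightarrow> (\<forall>m\<in>{1..length \<alpha>}. 0 \<le> raised_entry n \<alpha> m)"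
  by (auto simp: raise_eq_map simp del: upt_Suc)

text \<open>Each R_(a,b) lowers the position weight by b - a > 0, so it bounds the total degree of the
  monomials that contribute to RD.\<close>
definition position_weight :: "int list \<Rightarrow> int" where
  "position_weight \<alpha> = (\<Sum>m\<in>{1..length \<alpha>}. int m * \<alpha> ! (m - 1))"

lemma position_weight_raise:
  "position_weight (raise n \<alpha>)
     = position_weight \<alpha> - (\<Sum>p\<in>pairs (length \<alpha>). int (n p) * (int (snd p) - int (fst p)))"
proof -
  let ?l = "length \<alpha>"
  have "pairs ?l = Sigma {1..?l} (\<lambda>m. {m<..?l})"
    by (auto simp: pairs_def)
  then have raising: "(\<Sum>m\<in>{1..?l}. int m * (\<Sum>b\<in>{m<..?l}. int (n (m, b))))
      = (\<Sum>p\<in>pairs ?l. int (n p) * int (fst p))"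
    by (simp add: sum.Sigma sum_distrib_left split_def mult.commute prod.swap_def)
  have "pairs ?l = prod.swap ` Sigma {1..?l} (\<lambda>m. {1..<m})"
    by (auto simp: pairs_def image_iff)
  then have "(\<Sum>p\<in>pairs ?l. int (n p) * int (snd p))
      = (\<Sum>q\<in>Sigma {1..?l} (\<lambda>m. {1..<m}). int (n (prod.swap q)) * int (fst q))"
    by (simp add: sum.reindex)
  then have lowering: "(\<Sum>m\<in>{1..?l}. int m * (\<Sum>a\<in>{1..<m}. int (n (a, m))))
      = (\<Sum>p\<in>pairs ?l. int (n p) * int (snd p))"
    by (simp add: sum.Sigma sum_distrib_left split_def mult.commute prod.swap_def)
  have "position_weight (raise n \<alpha>) = (\<Sum>m\<in>{1..?l}. int m * raised_entry n \<alpha> m)"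
    unfolding position_weight_def length_raise by (intro sum.cong refl) (metis atLeastAtMost_iff nth_raise)
  also have "\<dots> = position_weight \<alpha> + (\<Sum>m\<in>{1..?l}. int m * (\<Sum>b\<in>{m<..?l}. int (n (m, b))))
        - (\<Sum>m\<in>{1..?l}. int m * (\<Sum>a\<in>{1..<m}. int (n (a, m))))"
    unfolding raised_entry_def position_weight_def
    by (simp add: algebra_simps sum.distrib sum_subtractf)
  finally show ?thesis
    unfolding raising lowering by (simp add: algebra_simps sum_subtractf)
qed

lemma sum_exps_le_position_weight:
  assumes "\<forall>x\<in>set (raise n \<alpha>). 0 \<le> x"
  shows "int (\<Sum>p\<in>pairs (length \<alpha>). n p) \<le> position_weight \<alpha>"
proof -
  have "int (\<Sum>p\<in>pairs (length \<alpha>). n p) \<le> (\<Sum>p\<in>pairs (length \<alpha>). int (n p) * (int (snd p) - int (fst p)))"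
    unfolding of_nat_sum
  proof (rule sum_mono)
    fix p assume "p \<in> pairs (length \<alpha>)"
    then have "1 \<le> int (snd p) - int (fst p)" by (auto simp: pairs_def)
    then show "int (n p) \<le> int (n p) * (int (snd p) - int (fst p))"
      using mult_left_mono[of 1 _ "int (n p)"] by simp
  qed
  also have "\<dots> = position_weight \<alpha> - position_weight (raise n \<alpha>)"
    by (simp add: position_weight_raise)
  finally have "int (\<Sum>p\<in>pairs (length \<alpha>). n p) \<le> position_weight \<alpha> - position_weight (raise n \<alpha>)" .
  moreover have "position_weight (raise n \<alpha>) \<ge> 0"
  proof -
    have "0 \<le> raise n \<alpha> ! (m - 1)" if "m \<in> {1..length \<alpha>}" for m
      using that by (intro assms[rule_format] nth_mem) auto
    then show ?thesis
      unfolding position_weight_def by (intro sum_nonneg) simp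
  qed
  ultimately show ?thesis by linarith
qed

lemma finite_pairs [simp]: "finite (pairs l)"
  by (rule finite_subset[of _ "{1..l} \<times> {1..l}"]) (auto simp: pairs_def)

definition RD_support :: "int list \<Rightarrow> (nat \<times> nat \<Rightarrow> nat) set" where
  "RD_support \<alpha> = {n. (\<forall>p. p \<notin> pairs (length \<alpha>) \<longrightarrow> n p = 0) \<and> (\<forall>x\<in>set (raise n \<alpha>). 0 \<le> x)}"

lemma RD_support_outside:
  assumes "n \<in> RD_support \<alpha>" "p \<notin> pairs (length \<alpha>)"
  shows "n p = 0"
  using assms by (cases p) (simp add: RD_support_def)

lemma RD_support_subset_exps_le:
  "RD_support \<alpha> \<subseteq> exps_le (pairs (length \<alpha>)) (nat (position_weight \<alpha>))"
proof
  fix n assume "n \<in> RD_support \<alpha>"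
  then have "\<forall>p. p \<notin> pairs (length \<alpha>) \<longrightarrow> n p = 0"
    and "int (\<Sum>p\<in>pairs (length \<alpha>). n p) \<le> position_weight \<alpha>"
    using sum_exps_le_position_weight by (auto simp: RD_support_def simp del: of_nat_sum)
  moreover from this(2) have "(\<Sum>p\<in>pairs (length \<alpha>). n p) \<le> nat (position_weight \<alpha>)"
    by linarith
  ultimately show "n \<in> exps_le (pairs (length \<alpha>)) (nat (position_weight \<alpha>))"
    by (auto simp: exps_le_def)
qed

lemma finite_RD_support: "finite (RD_support \<alpha>)"
  by (rule finite_subset[OF RD_support_subset_exps_le finite_exps_le]) simp

lemma RD_eq_sum_superset:
  fixes \<sigma> :: "nat \<Rightarrow> int \<Rightarrow> 'a::comm_ring_1"
  assumes "finite B" and "\<And>n p. n \<in> B \<Longrightarrow> p \<notin> pairs (length \<alpha>) \<Longrightarrow> n p = 0"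
    and "RD_support \<alpha> \<subseteq> B" and signeg: "\<forall>r\<ge>1. \<forall>i<0. \<sigma> r i = 0"
  shows "RD D \<sigma> \<alpha> = (\<Sum>n\<in>B. of_int (RD_coeff D (length \<alpha>) n) * smon \<sigma> (raise n \<alpha>))"
  unfolding RD_def RD_support_def[symmetric]
proof (rule sum.mono_neutral_left[OF assms(1,3)], rule ballI)
  fix n assume "n \<in> B - RD_support \<alpha>"
  then obtain m where m: "m \<in> {1..length \<alpha>}" "raised_entry n \<alpha> m < 0"
    using assms(2) unfolding RD_support_def raise_nonneg_iff by force
  then have "smon \<sigma> (raise n \<alpha>) = 0"
    unfolding smon_raise using signeg by (intro prod_zero bexI[of _ m]) auto
  then show "of_int (RD_coeff D (length \<alpha>) n) * smon \<sigma> (raise n \<alpha>) = 0" by simp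
qed

lemma raised_entry_fun_upd:
  assumes "(a, b) \<in> pairs (length \<alpha>)" and "n (a, b) = 0"
  shows "raised_entry (n((a, b) := v)) \<alpha> m
           = raised_entry n \<alpha> m + (if m = a then int v else 0) - (if m = b then int v else 0)"
proof -
  have upd: "int ((n((a, b) := v)) p) = int (n p) + (if p = (a, b) then int v else 0)" for p
    using assms(2) by auto
  have delta: "(\<Sum>b'\<in>B. if (m', b') = (a, b) then int v else 0) = (if m' = a \<and> b \<in> B then int v else 0)"
    and delta': "(\<Sum>a'\<in>A. if (a', m') = (a, b) then int v else 0) = (if m' = b \<and> a \<in> A then int v else 0)"
    if "finite A" "finite B" for A B m'
    using that by (cases "m' = a"; cases "m' = b"; simp)+
  show ?thesis
    using assms(1) unfolding raised_entry_def upd sum.distrib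
    by (auto simp: delta delta' pairs_def)
qed

lemma RD_coeff_fun_upd:
  assumes "q \<in> pairs l" and "n q = 0"
  shows "RD_coeff D l (n(q := v)) = RD_coeff D l n * fps_nth (RD_factor D q) v"
  using assms by (simp add: RD_coeff_def prod.remove mult.commute)

lemma smon_raise_remove:
  assumes "j \<in> {1..length \<alpha>}"
  shows "smon \<sigma> (raise n \<alpha>) = \<sigma> j (raised_entry n \<alpha> j) * (\<Prod>m\<in>{1..length \<alpha>} - {j}. \<sigma> m (raised_entry n \<alpha> m))"
  unfolding smon_raise using assms by (simp add: prod.remove)

lemma raised_entry_lower:
  assumes "1 \<le> j" "j \<le> length \<alpha>" "m \<in> {1..length \<alpha>}"
  shows "raised_entry n (\<alpha>[j - 1 := \<alpha> ! (j - 1) - 1]) m = raised_entry n \<alpha> m - (if m = j then 1 else 0)"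
  using assms by (auto simp: raised_entry_def nth_list_update)

lemma RD_support_lower_subset:
  assumes j: "1 \<le> j" "j \<le> length \<alpha>"
  shows "RD_support (\<alpha>[j - 1 := \<alpha> ! (j - 1) - 1]) \<subseteq> RD_support \<alpha>"
proof
  fix n assume "n \<in> RD_support (\<alpha>[j - 1 := \<alpha> ! (j - 1) - 1])"
  then have supp: "\<forall>p. p \<notin> pairs (length \<alpha>) \<longrightarrow> n p = 0"
    and nonneg: "\<forall>m\<in>{1..length \<alpha>}. 0 \<le> raised_entry n (\<alpha>[j - 1 := \<alpha> ! (j - 1) - 1]) m"
    by (simp_all add: RD_support_def raise_nonneg_iff)
  have "\<forall>m\<in>{1..length \<alpha>}. 0 \<le> raised_entry n \<alpha> m"
  proof
    fix m assume m: "m \<in> {1..length \<alpha>}"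
    show "0 \<le> raised_entry n \<alpha> m"
      using bspec[OF nonneg m] raised_entry_lower[OF j m, of n] by (simp split: if_splits)
  qed
  then show "n \<in> RD_support \<alpha>"
    using supp by (simp add: RD_support_def raise_nonneg_iff)
qed

lemma RD_shift_linear:
  fixes \<sigma> :: "nat \<Rightarrow> int \<Rightarrow> 'a::comm_ring_1" and z :: 'a
  assumes j: "1 \<le> j" "j \<le> length \<alpha>" and signeg: "\<forall>r\<ge>1. \<forall>i<0. \<sigma> r i = 0"
  shows "RD D (\<lambda>t p. if t = j then \<sigma> j p + z * \<sigma> j (p - 1) else \<sigma> t p) \<alpha>
           = RD D \<sigma> \<alpha> + z * RD D \<sigma> (\<alpha>[j - 1 := \<alpha> ! (j - 1) - 1])"
proof -
  define \<beta> where "\<beta> = \<alpha>[j - 1 := \<alpha> ! (j - 1) - 1]"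
  define \<tau> where "\<tau> = (\<lambda>t p. if t = j then \<sigma> j p + z * \<sigma> j (p - 1) else \<sigma> t p)"
  let ?coeff = "\<lambda>n. of_int (RD_coeff D (length \<alpha>) n)"
  have j\<alpha>: "j \<in> {1..length \<alpha>}" using j by simp
  have len: "length \<beta> = length \<alpha>" by (simp add: \<beta>_def)
  note entry = raised_entry_lower[OF j, folded \<beta>_def]
  have outside_\<tau>: "(\<Prod>m\<in>{1..length \<alpha>} - {j}. \<tau> m (raised_entry n \<alpha> m))
      = (\<Prod>m\<in>{1..length \<alpha>} - {j}. \<sigma> m (raised_entry n \<beta> m))" for n
    by (intro prod.cong refl) (simp add: \<tau>_def entry)
  have outside_\<sigma>: "(\<Prod>m\<in>{1..length \<alpha>} - {j}. \<sigma> m (raised_entry n \<alpha> m))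
      = (\<Prod>m\<in>{1..length \<alpha>} - {j}. \<sigma> m (raised_entry n \<beta> m))" for n
    by (intro prod.cong refl) (simp add: entry)
  have smon: "smon \<tau> (raise n \<alpha>) = smon \<sigma> (raise n \<alpha>) + z * smon \<sigma> (raise n \<beta>)" for n
    unfolding smon_raise_remove[OF j\<alpha>] smon_raise_remove[of j \<beta>, unfolded len, OF j\<alpha>]
      outside_\<tau> outside_\<sigma> entry[OF j\<alpha>]
    by (simp add: \<tau>_def algebra_simps)
  have "RD D \<sigma> \<beta> = (\<Sum>n\<in>RD_support \<alpha>. ?coeff n * smon \<sigma> (raise n \<beta>))"
    unfolding len[symmetric]
    by (rule RD_eq_sum_superset[OF finite_RD_support _ RD_support_lower_subset[OF j, folded \<beta>_def] signeg])
      (rule RD_support_outside, assumption, simp add: len)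
  moreover have "RD D \<tau> \<alpha> = (\<Sum>n\<in>RD_support \<alpha>. ?coeff n * smon \<tau> (raise n \<alpha>))"
    and "RD D \<sigma> \<alpha> = (\<Sum>n\<in>RD_support \<alpha>. ?coeff n * smon \<sigma> (raise n \<alpha>))"
    by (simp_all add: RD_def RD_support_def)
  ultimately show ?thesis
    unfolding \<tau>_def[symmetric] \<beta>_def[symmetric] smon
    by (simp add: distrib_left sum.distrib sum_distrib_left mult.left_commute)
qed

section \<open>Expansion in the exponent of R_(j,j+1)\<close>

definition smon_outside :: "(nat \<Rightarrow> int \<Rightarrow> 'a::comm_ring_1) \<Rightarrow> int list \<Rightarrow> nat \<Rightarrow> (nat \<times> nat \<Rightarrow> nat) \<Rightarrow> 'a" where
  "smon_outside \<sigma> \<alpha> j n = (\<Prod>m\<in>{1..length \<alpha>} - {j, j + 1}. \<sigma> m (raised_entry n \<alpha> m))"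

lemma smon_raise_split:
  assumes "1 \<le> j" "j + 1 \<le> length \<alpha>"
  shows "smon \<sigma> (raise n \<alpha>)
           = smon_outside \<sigma> \<alpha> j n * \<sigma> j (raised_entry n \<alpha> j) * \<sigma> (j + 1) (raised_entry n \<alpha> (j + 1))"
proof -
  have "(\<Prod>m\<in>{1..length \<alpha>}. \<sigma> m (raised_entry n \<alpha> m))
      = smon_outside \<sigma> \<alpha> j n * (\<Prod>m\<in>{j, j + 1}. \<sigma> m (raised_entry n \<alpha> m))"
    unfolding smon_outside_def by (rule prod.subset_diff) (use assms in auto)
  then show ?thesis by (simp add: smon_raise mult.assoc)
qed

lemma smon_outside_cong:
  assumes "\<And>m. m \<in> {1..length \<alpha>} - {j, j + 1} \<Longrightarrow> raised_entry n \<alpha> m = raised_entry n' \<alpha> m"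
  shows "smon_outside \<sigma> \<alpha> j n = smon_outside \<sigma> \<alpha> j n'"
  unfolding smon_outside_def using assms by (intro prod.cong) auto

lemma sum_pair_exp_eq_cayley_pair:
  fixes \<sigma> :: "nat \<Rightarrow> int \<Rightarrow> 'a::comm_ring_1" and c :: "int \<Rightarrow> 'a"
  assumes j: "1 \<le> j" "j + 1 \<le> length \<alpha>"
    and cneg: "\<forall>i<0. c i = 0" and \<sigma>j: "\<sigma> j = c" "\<sigma> (j + 1) = c"
    and jD: "(j, j + 1) \<in> D" and n0: "n (j, j + 1) = 0"
  shows "(\<Sum>i\<le>nat (raised_entry n \<alpha> (j + 1)).
            of_int (RD_coeff D (length \<alpha>) (n((j, j + 1) := i))) * smon \<sigma> (raise (n((j, j + 1) := i)) \<alpha>))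
       = of_int (RD_coeff D (length \<alpha>) n) * smon_outside \<sigma> \<alpha> j n
           * cayley_pair c (raised_entry n \<alpha> j) (raised_entry n \<alpha> (j + 1))"
proof -
  define x where "x = raised_entry n \<alpha> j"
  define y where "y = raised_entry n \<alpha> (j + 1)"
  have q: "(j, j + 1) \<in> pairs (length \<alpha>)" using j by (auto simp: pairs_def)
  note entry = raised_entry_fun_upd[where n = n, OF q n0]
  have smon: "smon \<sigma> (raise (n((j, j + 1) := i)) \<alpha>) = smon_outside \<sigma> \<alpha> j n * (c (x + int i) * c (y - int i))"
    for i
  proof -
    have "smon_outside \<sigma> \<alpha> j (n((j, j + 1) := i)) = smon_outside \<sigma> \<alpha> j n"
      by (rule smon_outside_cong) (unfold entry, simp)
    then show ?thesis
      unfolding smon_raise_split[OF j] entry \<sigma>j x_def y_def by (simp add: mult.assoc)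
  qed
  have coeff: "RD_coeff D (length \<alpha>) (n((j, j + 1) := i)) = RD_coeff D (length \<alpha>) n * cayley_coeff (int i)"
    for i
    using RD_coeff_fun_upd[where n = n, OF q n0] fps_nth_RD_factor_mem[OF jD] by simp
  have "(\<Sum>i\<le>nat y. of_int (RD_coeff D (length \<alpha>) (n((j, j + 1) := i))) * smon \<sigma> (raise (n((j, j + 1) := i)) \<alpha>))
      = of_int (RD_coeff D (length \<alpha>) n) * smon_outside \<sigma> \<alpha> j n
          * (\<Sum>i\<le>nat y. of_int (cayley_coeff (int i)) * c (x + int i) * c (y - int i))"
    unfolding smon coeff sum_distrib_left by (intro sum.cong refl) (simp add: ac_simps)
  also have "(\<Sum>i\<le>nat y. of_int (cayley_coeff (int i)) * c (x + int i) * c (y - int i)) = cayley_pair c x y"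
    by (rule cayley_pair_eq_sum[OF cneg]) simp
  finally show ?thesis unfolding x_def y_def .
qed

lemma RD_support_subset_pair_exp:
  assumes j: "1 \<le> j" "j + 1 \<le> length \<alpha>" and M: "position_weight \<alpha> \<le> int M"
  shows "RD_support \<alpha> \<subseteq> (\<lambda>(n, i). n((j, j + 1) := i))
           ` Sigma (exps_le (pairs (length \<alpha>) - {(j, j + 1)}) M) (\<lambda>n. {..nat (raised_entry n \<alpha> (j + 1))})"
proof
  let ?l = "length \<alpha>" and ?q = "(j, j + 1)"
  have q: "?q \<in> pairs ?l" using j by (auto simp: pairs_def)
  fix n assume n: "n \<in> RD_support \<alpha>"
  define \<nu> where "\<nu> = n(?q := 0)"
  have n_eq: "n = \<nu>(?q := n ?q)" by (simp add: \<nu>_def)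
  have n_exps: "n \<in> exps_le (pairs ?l) (nat (position_weight \<alpha>))"
    using n RD_support_subset_exps_le by blast
  then have "(\<Sum>p\<in>pairs ?l. n p) \<le> M"
    using M exps_le_sum_bound by fastforce
  moreover have "(\<Sum>p\<in>pairs ?l - {?q}. \<nu> p) \<le> (\<Sum>p\<in>pairs ?l. n p)"
    by (simp add: \<nu>_def sum_mono2)
  moreover have "\<forall>p. p \<notin> pairs ?l - {?q} \<longrightarrow> \<nu> p = 0"
  proof (intro allI impI)
    fix p assume "p \<notin> pairs ?l - {?q}"
    then show "\<nu> p = 0"
      using exps_le_outside[OF n_exps] by (cases "p = ?q") (simp_all add: \<nu>_def)
  qed
  ultimately have "\<nu> \<in> exps_le (pairs ?l - {?q}) M"
    unfolding exps_le_def by simp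
  moreover have "n ?q \<le> nat (raised_entry \<nu> \<alpha> (j + 1))"
  proof -
    have "0 \<le> raised_entry n \<alpha> (j + 1)"
      using n j by (auto simp: RD_support_def raise_nonneg_iff)
    moreover have "raised_entry n \<alpha> (j + 1) = raised_entry \<nu> \<alpha> (j + 1) - int (n ?q)"
      by (subst n_eq, subst raised_entry_fun_upd[OF q]) (simp_all add: \<nu>_def)
    ultimately show ?thesis by linarith
  qed
  ultimately show "n \<in> (\<lambda>(n, i). n(?q := i)) ` Sigma (exps_le (pairs ?l - {?q}) M) (\<lambda>n. {..nat (raised_entry n \<alpha> (j + 1))})"
    using n_eq by (intro image_eqI[of _ _ "(\<nu>, n ?q)"]) simp_all
qed

lemma RD_pair_expansion:
  fixes \<sigma> :: "nat \<Rightarrow> int \<Rightarrow> 'a::comm_ring_1" and c :: "int \<Rightarrow> 'a"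
  assumes j: "1 \<le> j" "j + 1 \<le> length \<alpha>"
    and signeg: "\<forall>r\<ge>1. \<forall>i<0. \<sigma> r i = 0" and cneg: "\<forall>i<0. c i = 0"
    and \<sigma>j: "\<sigma> j = c" "\<sigma> (j + 1) = c" and jD: "(j, j + 1) \<in> D"
    and M: "position_weight \<alpha> \<le> int M"
  shows "RD D \<sigma> \<alpha> = (\<Sum>n\<in>exps_le (pairs (length \<alpha>) - {(j, j + 1)}) M.
            of_int (RD_coeff D (length \<alpha>) n) * smon_outside \<sigma> \<alpha> j n
              * cayley_pair c (raised_entry n \<alpha> j) (raised_entry n \<alpha> (j + 1)))"
proof -
  let ?l = "length \<alpha>" and ?q = "(j, j + 1)"
  let ?B = "exps_le (pairs ?l - {?q}) M"
  let ?C = "\<lambda>n. {..nat (raised_entry n \<alpha> (j + 1))}"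
  let ?upd = "\<lambda>(n, i). n(?q := i)"
  have q: "?q \<in> pairs ?l" using j by (auto simp: pairs_def)
  have "RD D \<sigma> \<alpha> = (\<Sum>n\<in>?upd ` Sigma ?B ?C. of_int (RD_coeff D ?l n) * smon \<sigma> (raise n \<alpha>))"
  proof (rule RD_eq_sum_superset[OF _ _ RD_support_subset_pair_exp[OF j M] signeg])
    show "finite (?upd ` Sigma ?B ?C)"
      by (intro finite_imageI finite_SigmaI finite_exps_le) auto
    show "n p = 0" if "n \<in> ?upd ` Sigma ?B ?C" "p \<notin> pairs ?l" for n p
    proof -
      from that(1) obtain \<nu> i where "\<nu> \<in> ?B" "n = \<nu>(?q := i)" by auto
      moreover have "p \<noteq> ?q" using that(2) q by auto
      ultimately show ?thesis using exps_le_outside[of \<nu> _ M p] that(2) by simp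
    qed
  qed
  also have "\<dots> = (\<Sum>n\<in>?B. \<Sum>i\<in>?C n. of_int (RD_coeff D ?l (n(?q := i))) * smon \<sigma> (raise (n(?q := i)) \<alpha>))"
    by (rule sum_image_fun_upd[where f = "\<lambda>n. of_int (RD_coeff D ?l n) * smon \<sigma> (raise n \<alpha>)"])
      (simp_all add: finite_exps_le exps_le_outside)
  also have "\<dots> = (\<Sum>n\<in>?B. of_int (RD_coeff D ?l n) * smon_outside \<sigma> \<alpha> j n
                    * cayley_pair c (raised_entry n \<alpha> j) (raised_entry n \<alpha> (j + 1)))"
    by (intro sum.cong refl sum_pair_exp_eq_cayley_pair[OF j cneg \<sigma>j jD]) (simp add: exps_le_outside)
  finally show ?thesis .
qed

section \<open>Exchanging the positions j and j+1\<close>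

definition swap_pair :: "nat \<Rightarrow> nat \<times> nat \<Rightarrow> nat \<times> nat" where
  "swap_pair j = map_prod (transpose j (j + 1)) (transpose j (j + 1))"

lemma swap_pair_swap_pair [simp]: "swap_pair j (swap_pair j p) = p"
  by (cases p) (simp add: swap_pair_def)

lemma swap_pair_mem:
  assumes "1 \<le> j" "j + 1 \<le> l" "p \<in> pairs l - {(j, j + 1)}"
  shows "swap_pair j p \<in> pairs l - {(j, j + 1)}"
  using assms by (cases p) (auto simp: swap_pair_def pairs_def transpose_def)

lemma bij_betw_swap_pair:
  assumes "1 \<le> j" "j + 1 \<le> l"
  shows "bij_betw (swap_pair j) (pairs l - {(j, j + 1)}) (pairs l - {(j, j + 1)})"
proof -
  have sub: "swap_pair j ` (pairs l - {(j, j + 1)}) \<subseteq> pairs l - {(j, j + 1)}"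
    by (rule image_subsetI) (rule swap_pair_mem[OF assms])
  show ?thesis
    by (rule bij_betw_byWitness[where f' = "swap_pair j"]) (use sub in simp_all)
qed

lemma swap_exps_le:
  assumes j: "1 \<le> j" "j + 1 \<le> l" and n: "n \<in> exps_le (pairs l - {(j, j + 1)}) M"
  shows "n \<circ> swap_pair j \<in> exps_le (pairs l - {(j, j + 1)}) M"
  unfolding exps_le_def
proof (intro CollectI conjI allI impI)
  fix p assume p: "p \<notin> pairs l - {(j, j + 1)}"
  have "swap_pair j p \<notin> pairs l - {(j, j + 1)}"
    using p swap_pair_mem[OF j, of "swap_pair j p"] by auto
  then show "(n \<circ> swap_pair j) p = 0"
    using exps_le_outside[OF n] by simp
next
  have "(\<Sum>p\<in>pairs l - {(j, j + 1)}. (n \<circ> swap_pair j) p) = (\<Sum>p\<in>pairs l - {(j, j + 1)}. n p)"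
    using sum.reindex_bij_betw[OF bij_betw_swap_pair[OF j], of n] by simp
  then show "(\<Sum>p\<in>pairs l - {(j, j + 1)}. (n \<circ> swap_pair j) p) \<le> M"
    using exps_le_sum_bound[OF n] by simp
qed

lemma raised_entry_eq_full_sums:
  assumes "\<And>p. p \<notin> pairs (length \<alpha>) \<Longrightarrow> n p = 0" and "m \<in> {1..length \<alpha>}"
  shows "raised_entry n \<alpha> m
           = \<alpha> ! (m - 1) + (\<Sum>b\<in>{1..length \<alpha>}. int (n (m, b))) - (\<Sum>a\<in>{1..length \<alpha>}. int (n (a, m)))"
proof -
  have "(\<Sum>b\<in>{m<..length \<alpha>}. int (n (m, b))) = (\<Sum>b\<in>{1..length \<alpha>}. int (n (m, b)))"
    using assms by (intro sum.mono_neutral_left) (auto simp: pairs_def)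
  moreover have "(\<Sum>a\<in>{1..<m}. int (n (a, m))) = (\<Sum>a\<in>{1..length \<alpha>}. int (n (a, m)))"
    using assms by (intro sum.mono_neutral_left) (auto simp: pairs_def)
  ultimately show ?thesis by (simp add: raised_entry_def)
qed

lemma raised_entry_swap:
  assumes j: "1 \<le> j" "j + 1 \<le> length \<alpha>" and n: "n \<in> exps_le (pairs (length \<alpha>) - {(j, j + 1)}) M"
    and len: "length \<alpha>' = length \<alpha>"
    and swapped: "\<forall>m\<in>{1..length \<alpha>}. \<alpha>' ! (m - 1) = \<alpha> ! (transpose j (j + 1) m - 1)"
    and m: "m \<in> {1..length \<alpha>}"
  shows "raised_entry (n \<circ> swap_pair j) \<alpha>' m = raised_entry n \<alpha> (transpose j (j + 1) m)"
proof -
  let ?l = "length \<alpha>" and ?\<tau> = "transpose j (j + 1)"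
  have supp: "n p = 0" if "p \<notin> pairs ?l" for p
    using that exps_le_outside[OF n, of p] by simp
  have supp': "(n \<circ> swap_pair j) p = 0" if "p \<notin> pairs (length \<alpha>')" for p
    using that len exps_le_outside[OF swap_exps_le[OF j n], of p] by simp
  have \<tau>: "bij_betw ?\<tau> {1..?l} {1..?l}"
    using j by (intro bij_betw_transpose_iff) auto
  have \<tau>m: "?\<tau> m \<in> {1..?l}"
    using m j by (auto simp: transpose_def)
  have "raised_entry (n \<circ> swap_pair j) \<alpha>' m
      = \<alpha> ! (?\<tau> m - 1) + (\<Sum>b\<in>{1..?l}. int (n (?\<tau> m, ?\<tau> b))) - (\<Sum>a\<in>{1..?l}. int (n (?\<tau> a, ?\<tau> m)))"
    using raised_entry_eq_full_sums[where n = "n \<circ> swap_pair j" and \<alpha> = \<alpha>' and m = m, OF supp']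
      m len bspec[OF swapped m] by (simp add: swap_pair_def)
  also have "\<dots> = raised_entry n \<alpha> (?\<tau> m)"
    using raised_entry_eq_full_sums[OF supp \<tau>m]
      sum.reindex_bij_betw[OF \<tau>, of "\<lambda>b. int (n (?\<tau> m, b))"]
      sum.reindex_bij_betw[OF \<tau>, of "\<lambda>a. int (n (a, ?\<tau> m))"]
    by simp
  finally show ?thesis .
qed

lemma RD_coeff_swap:
  assumes j: "1 \<le> j" "j + 1 \<le> l" and n: "n \<in> exps_le (pairs l - {(j, j + 1)}) M"
    and Dswap: "\<forall>p\<in>pairs l - {(j, j + 1)}. swap_pair j p \<in> D \<longleftrightarrow> p \<in> D"
  shows "RD_coeff D l (n \<circ> swap_pair j) = RD_coeff D l n"
proof -
  define P where "P = pairs l - {(j, j + 1)}"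
  have pairs: "pairs l = insert (j, j + 1) P" and q: "(j, j + 1) \<notin> P"
    using j by (auto simp: pairs_def P_def)
  have fin: "finite P" by (simp add: P_def)
  have "(\<Prod>p\<in>P. fps_nth (RD_factor D p) (n (swap_pair j p)))
      = (\<Prod>p\<in>P. fps_nth (RD_factor D (swap_pair j p)) (n (swap_pair j p)))"
    using Dswap by (intro prod.cong refl) (simp add: RD_factor_def P_def)
  also have "\<dots> = (\<Prod>p\<in>P. fps_nth (RD_factor D p) (n p))"
    using prod.reindex_bij_betw[OF bij_betw_swap_pair[OF j], of "\<lambda>p. fps_nth (RD_factor D p) (n p)"]
    by (simp add: P_def)
  moreover have "n (j, j + 1) = 0"
    by (rule exps_le_outside[OF n]) simp
  moreover have "n (swap_pair j (j, j + 1)) = 0"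
    by (rule exps_le_outside[OF n]) (simp add: swap_pair_def pairs_def)
  ultimately show ?thesis
    unfolding RD_coeff_def pairs using q fin by simp
qed

lemma smon_outside_swap:
  assumes j: "1 \<le> j" "j + 1 \<le> length \<alpha>" and n: "n \<in> exps_le (pairs (length \<alpha>) - {(j, j + 1)}) M"
    and len: "length \<alpha>' = length \<alpha>"
    and swapped: "\<forall>m\<in>{1..length \<alpha>}. \<alpha>' ! (m - 1) = \<alpha> ! (transpose j (j + 1) m - 1)"
  shows "smon_outside \<sigma> \<alpha>' j (n \<circ> swap_pair j) = smon_outside \<sigma> \<alpha> j n"
  unfolding smon_outside_def len
proof (intro prod.cong refl)
  fix m assume m: "m \<in> {1..length \<alpha>} - {j, j + 1}"
  then have "transpose j (j + 1) m = m" by auto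
  then show "\<sigma> m (raised_entry (n \<circ> swap_pair j) \<alpha>' m) = \<sigma> m (raised_entry n \<alpha> m)"
    using raised_entry_swap[OF j n len swapped, of m] m by simp
qed

lemma sum_exps_le_swap:
  fixes G :: "int \<Rightarrow> int \<Rightarrow> 'a::comm_ring_1"
  assumes j: "1 \<le> j" "j + 1 \<le> length \<alpha>"
    and len: "length \<alpha>' = length \<alpha>"
    and swapped: "\<forall>m\<in>{1..length \<alpha>}. \<alpha>' ! (m - 1) = \<alpha> ! (transpose j (j + 1) m - 1)"
    and Dswap: "\<forall>p\<in>pairs (length \<alpha>) - {(j, j + 1)}. swap_pair j p \<in> D \<longleftrightarrow> p \<in> D"
  shows "(\<Sum>n\<in>exps_le (pairs (length \<alpha>) - {(j, j + 1)}) M.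
            of_int (RD_coeff D (length \<alpha>) n) * smon_outside \<sigma> \<alpha>' j n
              * G (raised_entry n \<alpha>' j) (raised_entry n \<alpha>' (j + 1)))
       = (\<Sum>n\<in>exps_le (pairs (length \<alpha>) - {(j, j + 1)}) M.
            of_int (RD_coeff D (length \<alpha>) n) * smon_outside \<sigma> \<alpha> j n
              * G (raised_entry n \<alpha> (j + 1)) (raised_entry n \<alpha> j))"
proof (rule sym, rule sum.reindex_bij_witness[where i = "\<lambda>n. n \<circ> swap_pair j" and j = "\<lambda>n. n \<circ> swap_pair j"])
  fix n assume n: "n \<in> exps_le (pairs (length \<alpha>) - {(j, j + 1)}) M"
  have "raised_entry (n \<circ> swap_pair j) \<alpha>' j = raised_entry n \<alpha> (j + 1)"
    and "raised_entry (n \<circ> swap_pair j) \<alpha>' (j + 1) = raised_entry n \<alpha> j"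
    using raised_entry_swap[OF j n len swapped, of j] raised_entry_swap[OF j n len swapped, of "j + 1"] j
    by simp_all
  then show "of_int (RD_coeff D (length \<alpha>) (n \<circ> swap_pair j)) * smon_outside \<sigma> \<alpha>' j (n \<circ> swap_pair j)
        * G (raised_entry (n \<circ> swap_pair j) \<alpha>' j) (raised_entry (n \<circ> swap_pair j) \<alpha>' (j + 1))
      = of_int (RD_coeff D (length \<alpha>) n) * smon_outside \<sigma> \<alpha> j n
        * G (raised_entry n \<alpha> (j + 1)) (raised_entry n \<alpha> j)"
    by (simp add: RD_coeff_swap[OF j n Dswap] smon_outside_swap[OF j n len swapped])
qed (blast intro: swap_exps_le[OF j] | simp add: fun_eq_iff)+

definition sym_term :: "(nat \<times> nat) set \<Rightarrow> (nat \<Rightarrow> int \<Rightarrow> 'a::comm_ring_1) \<Rightarrow> (int \<Rightarrow> 'a) \<Rightarrow> int list \<Rightarrow> nat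
    \<Rightarrow> (nat \<times> nat \<Rightarrow> nat) \<Rightarrow> 'a" where
  "sym_term D \<sigma> c \<alpha> j n = of_int (RD_coeff D (length \<alpha>) n) * smon_outside \<sigma> \<alpha> j n
     * cayley_pair_sym c (raised_entry n \<alpha> j) (raised_entry n \<alpha> (j + 1))"

lemma RD_add_RD_swap:
  fixes \<sigma> :: "nat \<Rightarrow> int \<Rightarrow> 'a::comm_ring_1" and c :: "int \<Rightarrow> 'a"
  assumes j: "1 \<le> j" "j + 1 \<le> length \<alpha>"
    and signeg: "\<forall>r\<ge>1. \<forall>i<0. \<sigma> r i = 0" and cneg: "\<forall>i<0. c i = 0"
    and \<sigma>j: "\<sigma> j = c" "\<sigma> (j + 1) = c" and jD: "(j, j + 1) \<in> D"
    and Dswap: "\<forall>p\<in>pairs (length \<alpha>) - {(j, j + 1)}. swap_pair j p \<in> D \<longleftrightarrow> p \<in> D"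
    and len: "length \<alpha>' = length \<alpha>"
    and swapped: "\<forall>m\<in>{1..length \<alpha>}. \<alpha>' ! (m - 1) = \<alpha> ! (transpose j (j + 1) m - 1)"
    and M: "position_weight \<alpha> \<le> int M" "position_weight \<alpha>' \<le> int M"
  shows "RD D \<sigma> \<alpha> + RD D \<sigma> \<alpha>'
           = 2 * (\<Sum>n\<in>exps_le (pairs (length \<alpha>) - {(j, j + 1)}) M. sym_term D \<sigma> c \<alpha> j n)"
proof -
  let ?B = "exps_le (pairs (length \<alpha>) - {(j, j + 1)}) M"
  let ?x = "\<lambda>n. raised_entry n \<alpha> j" and ?y = "\<lambda>n. raised_entry n \<alpha> (j + 1)"
  have j': "j + 1 \<le> length \<alpha>'" using j len by simp
  have "RD D \<sigma> \<alpha>' = (\<Sum>n\<in>?B. of_int (RD_coeff D (length \<alpha>) n) * smon_outside \<sigma> \<alpha>' j n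
                        * cayley_pair c (raised_entry n \<alpha>' j) (raised_entry n \<alpha>' (j + 1)))"
    using RD_pair_expansion[OF j(1) j' signeg cneg \<sigma>j jD M(2)] unfolding len .
  also have "\<dots> = (\<Sum>n\<in>?B. of_int (RD_coeff D (length \<alpha>) n) * smon_outside \<sigma> \<alpha> j n
                        * cayley_pair c (?y n) (?x n))"
    by (rule sum_exps_le_swap[OF j len swapped Dswap])
  finally have "RD D \<sigma> \<alpha> + RD D \<sigma> \<alpha>' = (\<Sum>n\<in>?B. of_int (RD_coeff D (length \<alpha>) n) * smon_outside \<sigma> \<alpha> j n
                        * (cayley_pair c (?x n) (?y n) + cayley_pair c (?y n) (?x n)))"
    unfolding RD_pair_expansion[OF j signeg cneg \<sigma>j jD M(1)] by (simp add: distrib_left sum.distrib)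
  then show ?thesis
    by (simp add: cayley_pair_add_swap sym_term_def sum_distrib_left ac_simps)
qed

text \<open>The antisymmetric part cancels along the orbits of the swap involution; no division by 2 is needed.\<close>
lemma RD_swap_invariant_eq_sum_sym_term:
  fixes \<sigma> :: "nat \<Rightarrow> int \<Rightarrow> 'a::comm_ring_1" and c :: "int \<Rightarrow> 'a"
  assumes j: "1 \<le> j" "j + 1 \<le> length \<alpha>"
    and signeg: "\<forall>r\<ge>1. \<forall>i<0. \<sigma> r i = 0" and cneg: "\<forall>i<0. c i = 0"
    and \<sigma>j: "\<sigma> j = c" "\<sigma> (j + 1) = c" and jD: "(j, j + 1) \<in> D"
    and Dswap: "\<forall>p\<in>pairs (length \<alpha>) - {(j, j + 1)}. swap_pair j p \<in> D \<longleftrightarrow> p \<in> D"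
    and symm: "\<forall>m\<in>{1..length \<alpha>}. \<alpha> ! (m - 1) = \<alpha> ! (transpose j (j + 1) m - 1)"
    and M: "position_weight \<alpha> \<le> int M"
  shows "RD D \<sigma> \<alpha> = (\<Sum>n\<in>exps_le (pairs (length \<alpha>) - {(j, j + 1)}) M. sym_term D \<sigma> c \<alpha> j n)"
proof -
  let ?B = "exps_le (pairs (length \<alpha>) - {(j, j + 1)}) M"
  let ?x = "\<lambda>n. raised_entry n \<alpha> j" and ?y = "\<lambda>n. raised_entry n \<alpha> (j + 1)"
  define g where "g n = of_int (RD_coeff D (length \<alpha>) n) * smon_outside \<sigma> \<alpha> j n
                         * (cayley_pair c (?x n) (?y n) - cayley_pair_sym c (?x n) (?y n))" for n
  have "RD D \<sigma> \<alpha> = (\<Sum>n\<in>?B. g n + sym_term D \<sigma> c \<alpha> j n)"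
    unfolding RD_pair_expansion[OF j signeg cneg \<sigma>j jD M] g_def sym_term_def
    by (simp add: right_diff_distrib)
  also have "\<dots> = (\<Sum>n\<in>?B. g n) + (\<Sum>n\<in>?B. sym_term D \<sigma> c \<alpha> j n)"
    by (rule sum.distrib)
  also have "(\<Sum>n\<in>?B. g n) = 0"
  proof (rule sum_antisym_involution_eq_0[where h = "\<lambda>n. n \<circ> swap_pair j"])
    show "finite ?B" by (simp add: finite_exps_le)
  next
    fix n assume n: "n \<in> ?B"
    show "n \<circ> swap_pair j \<in> ?B" by (rule swap_exps_le[OF j n])
    show "n \<circ> swap_pair j \<circ> swap_pair j = n" by (simp add: comp_def)
    have x: "?x (n \<circ> swap_pair j) = ?y n" and y: "?y (n \<circ> swap_pair j) = ?x n"
      using raised_entry_swap[OF j n refl symm, of j] raised_entry_swap[OF j n refl symm, of "j + 1"] j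
      by simp_all
    show "g (n \<circ> swap_pair j) = - g n"
      unfolding g_def x y RD_coeff_swap[OF j n Dswap] smon_outside_swap[OF j n refl symm]
        cayley_pair_sub_sym_swap[of c "?y n" "?x n"] by (simp only: mult_minus_right)
    show "g n = 0" if "n \<circ> swap_pair j = n"
    proof -
      have "?x n = ?y n" using x that by simp
      then show ?thesis by (simp add: g_def cayley_pair_sym_diag)
    qed
  qed
  finally show ?thesis by simp
qed

section \<open>Cancellation of the rows above j\<close>

definition vanish_on_rows :: "nat set \<Rightarrow> nat \<Rightarrow> (nat \<times> nat \<Rightarrow> nat) set" where
  "vanish_on_rows H j = {n. \<forall>h\<in>H. n (h, j) = 0 \<and> n (h, j + 1) = 0}"

lemma sym_term_row_exps:
  fixes \<sigma> :: "nat \<Rightarrow> int \<Rightarrow> 'a::comm_ring_1" and c :: "int \<Rightarrow> 'a"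
  assumes h: "1 \<le> h" "h < j" and jl: "j + 1 \<le> length \<alpha>"
    and D: "(h, j) \<in> D" "(h, j + 1) \<in> D" and \<nu>: "\<nu> (h, j) = 0" "\<nu> (h, j + 1) = 0"
    and a: "a \<le> m"
  defines "x \<equiv> raised_entry \<nu> \<alpha> j" and "y \<equiv> raised_entry \<nu> \<alpha> (j + 1)"
  shows "sym_term D \<sigma> c \<alpha> j (\<nu>((h, j) := a, (h, j + 1) := m - a))
           = of_int (RD_coeff D (length \<alpha>) \<nu>) * smon_outside \<sigma> \<alpha> j (\<nu>((h, j) := m))
             * cayley_pair c ((x + y - int m) div 2) ((x + y - int m) div 2)
             * of_int (cayley_coeff (int a) * cayley_coeff (int (m - a)) * half_sign (x - y + int m - 2 * int a))"
proof -
  have q1: "(h, j) \<in> pairs (length \<alpha>)" and q2: "(h, j + 1) \<in> pairs (length \<alpha>)"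
    using h jl by (auto simp: pairs_def)
  have \<nu>1: "(\<nu>((h, j) := a)) (h, j + 1) = 0" using \<nu> by simp
  have entry: "raised_entry (\<nu>((h, j) := a, (h, j + 1) := m - a)) \<alpha> i
      = raised_entry \<nu> \<alpha> i + (if i = h then int m else 0) - (if i = j then int a else 0)
          - (if i = j + 1 then int m - int a else 0)" for i
    using raised_entry_fun_upd[where n = "\<nu>((h, j) := a)", OF q2 \<nu>1, of "m - a" i]
      raised_entry_fun_upd[where n = \<nu>, OF q1 \<nu>(1), of a i] a h
    by (auto simp: of_nat_diff)
  have entry_m: "raised_entry (\<nu>((h, j) := m)) \<alpha> i
      = raised_entry \<nu> \<alpha> i + (if i = h then int m else 0) - (if i = j then int m else 0)" for i
    by (rule raised_entry_fun_upd[where n = \<nu>, OF q1 \<nu>(1)])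
  have coeff: "RD_coeff D (length \<alpha>) (\<nu>((h, j) := a, (h, j + 1) := m - a))
      = RD_coeff D (length \<alpha>) \<nu> * cayley_coeff (int a) * cayley_coeff (int (m - a))"
    using RD_coeff_fun_upd[where n = "\<nu>((h, j) := a)", OF q2 \<nu>1, of D "m - a"]
      RD_coeff_fun_upd[where n = \<nu>, OF q1 \<nu>(1), of D a]
      fps_nth_RD_factor_mem[OF D(1)] fps_nth_RD_factor_mem[OF D(2)] by simp
  have outside: "smon_outside \<sigma> \<alpha> j (\<nu>((h, j) := a, (h, j + 1) := m - a)) = smon_outside \<sigma> \<alpha> j (\<nu>((h, j) := m))"
    by (rule smon_outside_cong) (unfold entry entry_m, simp)
  have ej: "raised_entry (\<nu>((h, j) := a, (h, j + 1) := m - a)) \<alpha> j = x - int a"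
    unfolding entry using h by (simp add: x_def)
  have ej1: "raised_entry (\<nu>((h, j) := a, (h, j + 1) := m - a)) \<alpha> (j + 1) = y - (int m - int a)"
    unfolding entry using h by (simp add: y_def)
  have sym: "cayley_pair_sym c (x - int a) (y - (int m - int a))
      = of_int (half_sign (x - y + int m - 2 * int a)) * cayley_pair c ((x + y - int m) div 2) ((x + y - int m) div 2)"
    by (simp add: cayley_pair_sym_def algebra_simps)
  show ?thesis
    unfolding sym_term_def coeff outside ej ej1 sym by (simp add: ac_simps)
qed

text \<open>The coefficients of R_(h,j) and R_(h,j+1) combine to the alternating convolution of
  cayley_coeff, which only survives at total exponent 0.\<close>
lemma sum_sym_term_row_exps:
  fixes \<sigma> :: "nat \<Rightarrow> int \<Rightarrow> 'a::comm_ring_1" and c :: "int \<Rightarrow> 'a"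
  assumes h: "1 \<le> h" "h < j" and jl: "j + 1 \<le> length \<alpha>"
    and D: "(h, j) \<in> D" "(h, j + 1) \<in> D" and \<nu>: "\<nu> (h, j) = 0" "\<nu> (h, j + 1) = 0"
  shows "(\<Sum>a\<le>m. sym_term D \<sigma> c \<alpha> j (\<nu>((h, j) := a, (h, j + 1) := m - a)))
           = (if m = 0 then sym_term D \<sigma> c \<alpha> j \<nu> else 0)"
proof -
  define x where "x = raised_entry \<nu> \<alpha> j"
  define y where "y = raised_entry \<nu> \<alpha> (j + 1)"
  define C where "C = of_int (RD_coeff D (length \<alpha>) \<nu>) * smon_outside \<sigma> \<alpha> j (\<nu>((h, j) := m))
                        * cayley_pair c ((x + y - int m) div 2) ((x + y - int m) div 2)"
  have "(\<Sum>a\<le>m. sym_term D \<sigma> c \<alpha> j (\<nu>((h, j) := a, (h, j + 1) := m - a)))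
      = C * of_int (\<Sum>a\<le>m. cayley_coeff (int a) * cayley_coeff (int (m - a)) * half_sign (x - y + int m - 2 * int a))"
    unfolding of_int_sum sum_distrib_left C_def x_def y_def
    by (intro sum.cong refl) (simp only: sym_term_row_exps[OF h jl D \<nu>] atMost_iff)
  also have "\<dots> = C * of_int (if m = 0 then half_sign (x - y) else 0)"
    by (simp only: cayley_coeff_half_sign_convolution)
  also have "\<dots> = (if m = 0 then sym_term D \<sigma> c \<alpha> j \<nu> else 0)"
    using fun_upd_idem[where f = \<nu>, OF \<nu>(1)] by (simp add: C_def sym_term_def cayley_pair_sym_def x_def y_def ac_simps)
  finally show ?thesis .
qed

lemma sum_sym_term_vanish_on_row:
  assumes h: "1 \<le> h" "h < j" "h \<notin> H" and jl: "j + 1 \<le> length \<alpha>"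
    and D: "(h, j) \<in> D" "(h, j + 1) \<in> D"
  shows "(\<Sum>n\<in>exps_le (pairs (length \<alpha>) - {(j, j + 1)}) M \<inter> vanish_on_rows H j. sym_term D \<sigma> c \<alpha> j n)
       = (\<Sum>n\<in>exps_le (pairs (length \<alpha>) - {(j, j + 1)}) M \<inter> vanish_on_rows (insert h H) j.
            sym_term D \<sigma> c \<alpha> j n)"
proof -
  let ?P = "pairs (length \<alpha>) - {(j, j + 1)}"
  let ?S0 = "exps_le ?P M \<inter> vanish_on_rows H j \<inter> {\<nu>. \<nu> (h, j) = 0 \<and> \<nu> (h, j + 1) = 0}"
  have "(\<Sum>n\<in>exps_le ?P M \<inter> vanish_on_rows H j. sym_term D \<sigma> c \<alpha> j n)
      = (\<Sum>\<nu>\<in>?S0. \<Sum>m\<le>M - sum \<nu> ?P. \<Sum>a\<le>m. sym_term D \<sigma> c \<alpha> j (\<nu>((h, j) := a, (h, j + 1) := m - a)))"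
  proof (rule sum_exps_le_split_two_coords[where f = "sym_term D \<sigma> c \<alpha> j"])
    show "(h, j) \<in> ?P" "(h, j + 1) \<in> ?P"
      using h jl by (auto simp: pairs_def)
    show "n((h, j) := a, (h, j + 1) := b) \<in> vanish_on_rows H j \<longleftrightarrow> n \<in> vanish_on_rows H j" for n a b
      using h(3) by (auto simp: vanish_on_rows_def)
  qed simp_all
  also have "\<dots> = (\<Sum>\<nu>\<in>?S0. sym_term D \<sigma> c \<alpha> j \<nu>)"
  proof (rule sum.cong[OF refl])
    fix \<nu> assume "\<nu> \<in> ?S0"
    then have \<nu>0: "\<nu> (h, j) = 0" "\<nu> (h, j + 1) = 0" by auto
    show "(\<Sum>m\<le>M - sum \<nu> ?P. \<Sum>a\<le>m. sym_term D \<sigma> c \<alpha> j (\<nu>((h, j) := a, (h, j + 1) := m - a)))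
        = sym_term D \<sigma> c \<alpha> j \<nu>"
      unfolding sum_sym_term_row_exps[OF h(1,2) jl D \<nu>0] by simp
  qed
  also have "?S0 = exps_le ?P M \<inter> vanish_on_rows (insert h H) j"
    by (auto simp: vanish_on_rows_def)
  finally show ?thesis .
qed

lemma sum_sym_term_vanish_on_rows:
  assumes jl: "j + 1 \<le> length \<alpha>" and H: "H \<subseteq> {1..<j}"
    and below: "\<forall>h\<in>H. (h, j) \<in> D \<and> (h, j + 1) \<in> D"
  shows "(\<Sum>n\<in>exps_le (pairs (length \<alpha>) - {(j, j + 1)}) M. sym_term D \<sigma> c \<alpha> j n)
       = (\<Sum>n\<in>exps_le (pairs (length \<alpha>) - {(j, j + 1)}) M \<inter> vanish_on_rows H j. sym_term D \<sigma> c \<alpha> j n)"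
proof -
  have "finite H" using H finite_subset by blast
  then show ?thesis using H below
  proof (induction H rule: finite_induct)
    case empty
    then show ?case by (simp add: vanish_on_rows_def)
  next
    case (insert h H)
    then have "(\<Sum>n\<in>exps_le (pairs (length \<alpha>) - {(j, j + 1)}) M. sym_term D \<sigma> c \<alpha> j n)
        = (\<Sum>n\<in>exps_le (pairs (length \<alpha>) - {(j, j + 1)}) M \<inter> vanish_on_rows H j. sym_term D \<sigma> c \<alpha> j n)"
      by simp
    also have "\<dots> = (\<Sum>n\<in>exps_le (pairs (length \<alpha>) - {(j, j + 1)}) M \<inter> vanish_on_rows (insert h H) j.
                        sym_term D \<sigma> c \<alpha> j n)"
      using insert by (intro sum_sym_term_vanish_on_row[OF _ _ _ jl]) auto
    finally show ?case .
  qed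
qed

lemma sum_sym_term_eq_0:
  fixes \<sigma> :: "nat \<Rightarrow> int \<Rightarrow> 'a::comm_ring_1" and c :: "int \<Rightarrow> 'a"
  assumes j: "1 \<le> j" "j + 1 \<le> length \<alpha>"
    and below: "\<forall>h\<in>{1..<j}. (h, j) \<in> D \<and> (h, j + 1) \<in> D"
    and large: "2 * int k < \<alpha> ! (j - 1) + \<alpha> ! j"
    and rel: "\<forall>p>k. cayley_pair c (int p) (int p) = 0"
  shows "(\<Sum>n\<in>exps_le (pairs (length \<alpha>) - {(j, j + 1)}) M. sym_term D \<sigma> c \<alpha> j n) = 0"
proof -
  let ?B = "exps_le (pairs (length \<alpha>) - {(j, j + 1)}) M"
  have "(\<Sum>n\<in>?B. sym_term D \<sigma> c \<alpha> j n) = (\<Sum>n\<in>?B \<inter> vanish_on_rows {1..<j} j. sym_term D \<sigma> c \<alpha> j n)"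
    by (rule sum_sym_term_vanish_on_rows[OF j(2) _ below]) simp
  also have "\<dots> = 0"
  proof (rule sum.neutral, rule ballI)
    fix n assume n: "n \<in> ?B \<inter> vanish_on_rows {1..<j} j"
    then have "n (j, j + 1) = 0"
      by (intro exps_le_outside[of n _ M]) auto
    with n have "(\<Sum>a\<in>{1..<j}. int (n (a, j))) = 0" "(\<Sum>a\<in>{1..<j + 1}. int (n (a, j + 1))) = 0"
      by (auto simp: vanish_on_rows_def less_Suc_eq)
    then have "\<alpha> ! (j - 1) \<le> raised_entry n \<alpha> j" "\<alpha> ! j \<le> raised_entry n \<alpha> (j + 1)"
      by (simp_all add: raised_entry_def sum_nonneg)
    then have "cayley_pair_sym c (raised_entry n \<alpha> j) (raised_entry n \<alpha> (j + 1)) = 0"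
      using large rel by (intro cayley_pair_sym_eq_0[of k]) auto
    then show "sym_term D \<sigma> c \<alpha> j n = 0" by (simp add: sym_term_def)
  qed
  finally show ?thesis .
qed

lemma valid_pairs_below:
  assumes "valid_pairs D" and "(j, j + 1) \<in> D"
  shows "\<forall>h\<in>{1..<j}. (h, j) \<in> D \<and> (h, j + 1) \<in> D"
proof
  fix h assume h: "h \<in> {1..<j}"
  have ideal: "\<forall>i j i' j'. (i, j) \<in> D \<and> 1 \<le> i' \<and> i' < j' \<and> i' \<le> i \<and> j' \<le> j \<longrightarrow> (i', j') \<in> D"
    using assms(1) unfolding valid_pairs_def by blast
  show "(h, j) \<in> D \<and> (h, j + 1) \<in> D"
    using ideal[rule_format, of j "j + 1" h j] ideal[rule_format, of j "j + 1" h "j + 1"] h assms(2)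
    by auto
qed

lemma valid_pairs_swap_pair:
  assumes valid: "valid_pairs D" and jD: "(j, j + 1) \<in> D"
    and Dsym: "\<forall>h>j + 1. (j, h) \<in> D \<longleftrightarrow> (j + 1, h) \<in> D"
  shows "\<forall>p\<in>pairs l - {(j, j + 1)}. swap_pair j p \<in> D \<longleftrightarrow> p \<in> D"
proof
  fix p assume p: "p \<in> pairs l - {(j, j + 1)}"
  obtain a b where ab: "p = (a, b)" by (cases p)
  have a: "1 \<le> a" "a < b" "(a, b) \<noteq> (j, j + 1)"
    using p ab by (auto simp: pairs_def)
  consider "a = j \<or> a = j + 1" | "a \<notin> {j, j + 1}" "b = j \<or> b = j + 1" | "a \<notin> {j, j + 1}" "b \<notin> {j, j + 1}"
    by blast
  then show "swap_pair j p \<in> D \<longleftrightarrow> p \<in> D"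
  proof cases
    case 1
    then have "j + 1 < b" using a by auto
    with 1 show ?thesis using Dsym ab by (auto simp: swap_pair_def)
  next
    case 2
    then have "a \<in> {1..<j}" using a by auto
    with 2 show ?thesis using valid_pairs_below[OF valid jD] ab by (auto simp: swap_pair_def)
  next
    case 3
    then show ?thesis using ab by (simp add: swap_pair_def)
  qed
qed

lemma nth_append_pair:
  assumes "length lam = j - 1" and "1 \<le> j"
  shows "(lam @ [x, y] @ mu) ! (j - 1) = x" and "(lam @ [x, y] @ mu) ! j = y"
proof -
  have "j = Suc (length lam)" using assms by simp
  then show "(lam @ [x, y] @ mu) ! (j - 1) = x" and "(lam @ [x, y] @ mu) ! j = y"
    by (simp_all add: nth_append)
qed

lemma nth_append_pair_swapped:
  assumes "length lam = j - 1" and "1 \<le> j"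
  shows "\<forall>m\<in>{1..length (lam @ [r, s] @ mu)}.
           (lam @ [s, r] @ mu) ! (m - 1) = (lam @ [r, s] @ mu) ! (transpose j (j + 1) m - 1)"
proof
  fix m assume "m \<in> {1..length (lam @ [r, s] @ mu)}"
  then consider "m = j" | "m = j + 1" | "m \<noteq> j" "m \<noteq> j + 1" "m - 1 < length lam" | "m - 1 \<ge> length lam + 2"
    using assms by fastforce
  then show "(lam @ [s, r] @ mu) ! (m - 1) = (lam @ [r, s] @ mu) ! (transpose j (j + 1) m - 1)"
  proof cases
    case 3
    then show ?thesis by (simp add: nth_append)
  next
    case 4
    then have "m \<noteq> j" "m \<noteq> j + 1" using assms by auto
    with 4 show ?thesis by (simp add: nth_append)
  qed (use nth_append_pair[OF assms] in simp_all)
qed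

lemma RD_swap_adjacent:
  fixes \<sigma> :: "nat \<Rightarrow> int \<Rightarrow> 'a::comm_ring_1" and c :: "int \<Rightarrow> 'a"
  assumes j: "1 \<le> j" and len: "length lam = j - 1"
    and signeg: "\<forall>r\<ge>1. \<forall>i<0. \<sigma> r i = 0" and cneg: "\<forall>i<0. c i = 0"
    and \<sigma>j: "\<sigma> j = c" "\<sigma> (j + 1) = c" and jD: "(j, j + 1) \<in> D"
    and below: "\<forall>h\<in>{1..<j}. (h, j) \<in> D \<and> (h, j + 1) \<in> D"
    and Dswap: "\<forall>p\<in>pairs (length (lam @ [r, s] @ mu)) - {(j, j + 1)}. swap_pair j p \<in> D \<longleftrightarrow> p \<in> D"
    and rel: "\<forall>p>k. cayley_pair c (int p) (int p) = 0"
    and large: "2 * int k < r + s"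
  shows "RD D \<sigma> (lam @ [r, s] @ mu) = - RD D \<sigma> (lam @ [s, r] @ mu)"
proof -
  let ?\<alpha> = "lam @ [r, s] @ mu" and ?\<alpha>' = "lam @ [s, r] @ mu"
  define M where "M = nat (max (position_weight ?\<alpha>) (position_weight ?\<alpha>'))"
  have jl: "j + 1 \<le> length ?\<alpha>" using j len by simp
  have "RD D \<sigma> ?\<alpha> + RD D \<sigma> ?\<alpha>'
      = 2 * (\<Sum>n\<in>exps_le (pairs (length ?\<alpha>) - {(j, j + 1)}) M. sym_term D \<sigma> c ?\<alpha> j n)"
    by (rule RD_add_RD_swap[OF j jl signeg cneg \<sigma>j jD Dswap _ nth_append_pair_swapped[OF len j]])
      (auto simp: M_def)
  also have "\<dots> = 0"
    using sum_sym_term_eq_0[OF j jl below _ rel] large nth_append_pair[OF len j] by simp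
  finally show ?thesis by (simp add: eq_neg_iff_add_eq_0)
qed

lemma RD_equal_adjacent_eq_0:
  fixes \<sigma> :: "nat \<Rightarrow> int \<Rightarrow> 'a::comm_ring_1" and c :: "int \<Rightarrow> 'a"
  assumes j: "1 \<le> j" and len: "length lam = j - 1"
    and signeg: "\<forall>r\<ge>1. \<forall>i<0. \<sigma> r i = 0" and cneg: "\<forall>i<0. c i = 0"
    and \<sigma>j: "\<sigma> j = c" "\<sigma> (j + 1) = c" and jD: "(j, j + 1) \<in> D"
    and below: "\<forall>h\<in>{1..<j}. (h, j) \<in> D \<and> (h, j + 1) \<in> D"
    and Dswap: "\<forall>p\<in>pairs (length (lam @ [r, r] @ mu)) - {(j, j + 1)}. swap_pair j p \<in> D \<longleftrightarrow> p \<in> D"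
    and rel: "\<forall>p>k. cayley_pair c (int p) (int p) = 0"
    and large: "int k < r"
  shows "RD D \<sigma> (lam @ [r, r] @ mu) = 0"
proof -
  let ?\<alpha> = "lam @ [r, r] @ mu"
  have jl: "j + 1 \<le> length ?\<alpha>" using j len by simp
  have "RD D \<sigma> ?\<alpha>
      = (\<Sum>n\<in>exps_le (pairs (length ?\<alpha>) - {(j, j + 1)}) (nat (position_weight ?\<alpha>)). sym_term D \<sigma> c ?\<alpha> j n)"
    by (rule RD_swap_invariant_eq_sum_sym_term[OF j jl signeg cneg \<sigma>j jD Dswap nth_append_pair_swapped[OF len j]])
      simp
  also have "\<dots> = 0"
    using sum_sym_term_eq_0[OF j jl below _ rel] large nth_append_pair[OF len j] by simp
  finally show ?thesis .
qed

theorem lemma7: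
  fixes \<sigma> :: "nat \<Rightarrow> int \<Rightarrow> 'a::comm_ring_1"
    and c :: "int \<Rightarrow> 'a"
    and D :: "(nat \<times> nat) set"
    and k j :: nat
    and lam mu :: "int list"
  assumes sig0: "\<forall>r\<ge>1. \<sigma> r 0 = 1"
    and signeg: "\<forall>r\<ge>1. \<forall>i<0. \<sigma> r i = 0"
    and c0: "c 0 = 1"
    and cneg: "\<forall>i<0. c i = 0"
    and j1: "j \<ge> 1"
    and len_lam: "length lam = j - 1"
    and valid: "valid_pairs D"
    and sigj: "\<sigma> j = c" and sigj1: "\<sigma> (j + 1) = c"
    and jj1: "(j, j + 1) \<in> D"
    and Dsym: "\<forall>h>j + 1. (j, h) \<in> D \<longleftrightarrow> (j + 1, h) \<in> D"
    and rel: "\<forall>p::nat. p > k \<longrightarrow>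
               c (int p) * c (int p)
               + 2 * (\<Sum>i\<in>{1..p}. (-1) ^ i * c (int p + int i) * c (int p - int i)) = 0"
  shows "(\<forall>r s::int. r + s > 2 * int k \<longrightarrow>
            RD D \<sigma> (lam @ [r, s] @ mu) = - RD D \<sigma> (lam @ [s, r] @ mu))
       \<and> (\<forall>(z::'a) (r::int). r > int k \<longrightarrow>
            RD D (\<lambda>t p. if t = j then \<sigma> j p + z * \<sigma> j (p - 1) else \<sigma> t p) (lam @ [r + 1, r] @ mu)
            = RD D \<sigma> (lam @ [r + 1, r] @ mu))"
proof -
  note below = valid_pairs_below[OF valid jj1]
  note Dswap = valid_pairs_swap_pair[OF valid jj1 Dsym]
  have rel': "\<forall>p>k. cayley_pair c (int p) (int p) = 0"
    using rel by (simp add: cayley_pair_diag)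
  show ?thesis
  proof (intro conjI allI impI)
    fix r s :: int assume "r + s > 2 * int k"
    then show "RD D \<sigma> (lam @ [r, s] @ mu) = - RD D \<sigma> (lam @ [s, r] @ mu)"
      by (rule RD_swap_adjacent[OF j1 len_lam signeg cneg sigj sigj1 jj1 below Dswap rel'])
  next
    fix z :: 'a and r :: int assume "r > int k"
    then have "RD D \<sigma> (lam @ [r, r] @ mu) = 0"
      by (rule RD_equal_adjacent_eq_0[OF j1 len_lam signeg cneg sigj sigj1 jj1 below Dswap rel'])
    moreover have "(lam @ [r + 1, r] @ mu)[j - 1 := (lam @ [r + 1, r] @ mu) ! (j - 1) - 1] = lam @ [r, r] @ mu"
      using len_lam nth_append_pair(1)[OF len_lam j1, of "r + 1" r mu] by (simp add: list_update_append)
    moreover have "j \<le> length (lam @ [r + 1, r] @ mu)"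
      using len_lam by simp
    ultimately show "RD D (\<lambda>t p. if t = j then \<sigma> j p + z * \<sigma> j (p - 1) else \<sigma> t p) (lam @ [r + 1, r] @ mu)
        = RD D \<sigma> (lam @ [r + 1, r] @ mu)"
      using RD_shift_linear[OF j1 _ signeg, of "lam @ [r + 1, r] @ mu" D z] by simp
  qed
qed

end
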